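(* Fix $0<\alpha<2\le\kappa$. Let $X_1$ be the number of potential offspring of a given parent pair in a generation where, with probability $\varepsilon_N\in(0,1)$, $X_1\vartriangleright\mathbb L(\alpha,\zeta(N))$ and otherwise $X_1\vartriangleright\mathbb L(\kappa,\zeta(N))$. Suppose that, as $N\to\infty$, $\varepsilon_N=O(\zeta(N)^{\alpha-1})$ when $0<\alpha<1$, $\varepsilon_N=O(1/\log\zeta(N))$ when $\alpha=1$, and $\varepsilon_N=O(1)$ when $\alpha>1$. Then $\limsup_{N\to\infty}\mathbb E[X_1]<\infty$.
   Context: For $a>0$ and a positive integer-valued deterministic function $\zeta(N)$, $X\vartriangleright\mathbb L(a,\zeta(N))$ means: $\mathbb P(X\le\zeta(N))=1$, the mass outside $\{2,\dots,\zeta(N)\}$ lies on $\{0,1\}$, and for $k\in\{2,\dots,\zeta(N)\}$, $g_a(k)(k^{-a}-(1+k)^{-a})\le\mathbb P(X=k)\le f_a(k)(k^{-a}-(1+k)^{-a})$, where $g_a\le f_a$ are bounded positive functions on $\mathbb N$ with $\inf_k\sup_{i\ge k}f_a(i)<\infty$ and $\sup_k\inf_{i\ge k}g_a(i)>0$, and it is assumed that $\mathbb E[X]>2$. *)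

theory Defs
  imports "HOL-Probability.Probability" "HOL-Library.Landau_Symbols"
begin

definition admissible_env :: "(nat \<Rightarrow> real) \<Rightarrow> (nat \<Rightarrow> real) \<Rightarrow> bool" where
  "admissible_env g f \<longleftrightarrow>
     (\<forall>k. 0 < g k \<and> g k \<le> f k) \<and> bounded (range f) \<and> bounded (range g) \<and>
     (\<exists>B. \<exists>k. \<forall>i\<ge>k. f i \<le> B) \<and>
     (\<exists>c>0. \<exists>k. \<forall>i\<ge>k. c \<le> g i)"

definition in_L :: "real \<Rightarrow> (nat \<Rightarrow> real) \<Rightarrow> (nat \<Rightarrow> real) \<Rightarrow> nat \<Rightarrow> nat pmf \<Rightarrow> bool" where
  "in_L a g f z P \<longleftrightarrow>
     measure_pmf.prob P {..z} = 1 \<and>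
     set_pmf P \<subseteq> {0, 1} \<union> {2..z} \<and>
     (\<forall>k\<in>{2..z}. g k * (real k powr (-a) - (1 + real k) powr (-a)) \<le> pmf P k \<and>
                 pmf P k \<le> f k * (real k powr (-a) - (1 + real k) powr (-a))) \<and>
     measure_pmf.expectation P real > 2"

end

theory Submission
  imports Defs
begin

text \<open>
  Conditioning on the coin, E[X] \<le> \<epsilon> E[A] + E[K].  For a law in L(a, z) with envelope
  f \<le> B, the mean value theorem gives k (k^-a - (k+1)^-a) \<le> a k^-a, so
  E \<le> 1 + B a \<Sum>_{k=2..z} k^-a.  Comparing these partial sums with an antiderivative
  of t^-a bounds them by z^(1-a)/(1-a), ln z or 1/(a-1) according as a < 1, a = 1 or a > 1.
  Hence E[K] is bounded because \<kappa> > 1, and the hypotheses on \<epsilon> are exactly what keeps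
  \<epsilon> \<Sum>_{k=2..z} k^-\<alpha> bounded.
\<close>

lemma powr_diff_mean_value:
  fixes x y p :: real
  assumes "0 < x" "x < y"
  obtains z where "x < z" "z < y" "y powr p - x powr p = (y - x) * (p * z powr (p - 1))"
proof -
  have "\<exists>z>x. z < y \<and> y powr p - x powr p = (y - x) * (p * z powr (p - 1))"
    using assms by (intro MVT2) (auto intro!: derivative_eq_intros)
  then show ?thesis
    using that by blast
qed

lemma powr_diff_add_one_le:
  fixes a x :: real
  assumes "0 < a" "0 < x"
  shows "x powr -a - (x + 1) powr -a \<le> a * x powr (-a - 1)"
proof -
  obtain z where z: "x < z"
    "(x + 1) powr -a - x powr -a = (x + 1 - x) * (-a * z powr (-a - 1))"
    using powr_diff_mean_value[of x "x + 1" "-a"] assms(2) by auto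
  have "a * z powr (-a - 1) \<le> a * x powr (-a - 1)"
    using z(1) assms by (intro mult_left_mono powr_mono2') auto
  then show ?thesis
    using z(2) by (simp add: algebra_simps)
qed

lemma powr_add_one_le_antiderivative_diff:
  fixes a x :: real
  assumes "0 < a" "a \<noteq> 1" "0 < x"
  shows "(x + 1) powr -a \<le> ((x + 1) powr (1 - a) - x powr (1 - a)) / (1 - a)"
proof -
  obtain z where z: "x < z" "z < x + 1"
    "(x + 1) powr (1 - a) - x powr (1 - a) = (x + 1 - x) * ((1 - a) * z powr (1 - a - 1))"
    using powr_diff_mean_value[of x "x + 1" "1 - a"] assms(3) by auto
  have "(x + 1) powr -a \<le> z powr -a"
    using z assms by (intro powr_mono2') auto
  then show ?thesis
    using z(3) assms(2) by simp
qed

lemma inverse_add_one_le_ln_diff: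
  fixes x :: real
  assumes "0 < x"
  shows "1 / (x + 1) \<le> ln (x + 1) - ln x"
proof -
  have "ln (x / (x + 1)) \<le> x / (x + 1) - 1"
    using assms by (intro ln_le_minus_one) auto
  also have "x / (x + 1) - 1 = - (1 / (x + 1))"
    using assms by (simp add: field_simps)
  finally show ?thesis
    using assms by (simp add: ln_div)
qed

lemma sum_le_telescope:
  fixes t F :: "nat \<Rightarrow> real"
  assumes "\<And>i. m \<le> i \<Longrightarrow> i < n \<Longrightarrow> t (Suc i) \<le> F (Suc i) - F i" "m \<le> n"
  shows "(\<Sum>k = Suc m..n. t k) \<le> F n - F m"
  using assms(2,1)
proof (induction n rule: dec_induct)
  case base
  then show ?case by simp
next
  case (step n)
  then show ?case by fastforce
qed

lemma sum_powr_le: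
  fixes a :: real
  assumes "0 < a" "a \<noteq> 1" "1 \<le> n"
  shows "(\<Sum>k = 2..n. real k powr -a) \<le> (real n powr (1 - a) - 1) / (1 - a)"
proof -
  have "real (Suc i) powr -a \<le> real (Suc i) powr (1 - a) / (1 - a) - real i powr (1 - a) / (1 - a)"
    if "1 \<le> i" for i
    using powr_add_one_le_antiderivative_diff[OF assms(1,2), of "real i"] that
    by (simp add: diff_divide_distrib add.commute)
  then show ?thesis
    using sum_le_telescope[of 1 n "\<lambda>k. real k powr -a" "\<lambda>k. real k powr (1 - a) / (1 - a)"] assms(3)
    by (simp add: numeral_2_eq_2 diff_divide_distrib)
qed

lemma sum_powr_neg_one_le_ln:
  assumes "1 \<le> n"
  shows "(\<Sum>k = 2..n. real k powr -1) \<le> ln (real n)"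
proof -
  have "real (Suc i) powr -1 \<le> ln (real (Suc i)) - ln (real i)" if "1 \<le> i" for i
    using inverse_add_one_le_ln_diff[of "real i"] that by (simp add: powr_minus_divide add.commute)
  then show ?thesis
    using sum_le_telescope[of 1 n "\<lambda>k. real k powr -1" "\<lambda>k. ln (real k)"] assms
    by (simp add: numeral_2_eq_2)
qed

lemma sum_powr_le_of_gt_1:
  fixes a :: real
  assumes "1 < a"
  shows "(\<Sum>k = 2..n. real k powr -a) \<le> 1 / (a - 1)"
proof (cases "n = 0")
  case False
  then have "(\<Sum>k = 2..n. real k powr -a) \<le> (real n powr (1 - a) - 1) / (1 - a)"
    using assms by (intro sum_powr_le) auto
  also have "\<dots> = (1 - real n powr (1 - a)) / (a - 1)"
    using assms by (simp add: field_simps)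
  also have "\<dots> \<le> 1 / (a - 1)"
    using assms by (intro divide_right_mono) auto
  finally show ?thesis .
qed (use assms in simp)

lemma expectation_bernoulli_mixture:
  fixes P Q :: "'a pmf" and h :: "'a \<Rightarrow> real"
  assumes "0 \<le> p" "p \<le> 1" "finite (set_pmf P)" "finite (set_pmf Q)"
  shows "measure_pmf.expectation (bernoulli_pmf p \<bind> (\<lambda>b. if b then P else Q)) h
      = p * measure_pmf.expectation P h + (1 - p) * measure_pmf.expectation Q h"
  using assms by (subst pmf_expectation_bind[of UNIV]) (auto simp: UNIV_bool)

lemma expectation_bernoulli_mixture_le:
  fixes P Q :: "'a pmf" and h :: "'a \<Rightarrow> real"
  assumes "0 \<le> p" "p \<le> 1" "finite (set_pmf P)" "finite (set_pmf Q)" "\<And>x. 0 \<le> h x"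
  shows "measure_pmf.expectation (bernoulli_pmf p \<bind> (\<lambda>b. if b then P else Q)) h
      \<le> p * measure_pmf.expectation P h + measure_pmf.expectation Q h"
proof -
  have "(1 - p) * measure_pmf.expectation Q h \<le> measure_pmf.expectation Q h"
    using assms by (intro mult_left_le_one_le integral_nonneg_AE) auto
  then show ?thesis
    using expectation_bernoulli_mixture[OF assms(1-4)] by simp
qed

lemma admissible_env_bounded_above:
  assumes "admissible_env g f"
  obtains B where "0 \<le> B" "\<And>k. f k \<le> B"
proof -
  obtain B where "\<forall>k. \<bar>f k\<bar> \<le> B"
    using assms unfolding admissible_env_def bounded_iff by auto
  then show ?thesis
    using that[of B] by (meson abs_ge_self abs_ge_zero order_trans)
qed

lemma in_L_finite_support:
  assumes "in_L a g f z P"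
  shows "finite (set_pmf P)"
  using assms unfolding in_L_def by (auto intro: finite_subset)

lemma in_L_expectation_le:
  fixes a B :: real
  assumes "in_L a g f z P" "0 < a" "\<And>k. f k \<le> B" "0 \<le> B"
  shows "measure_pmf.expectation P real \<le> 1 + B * a * (\<Sum>k = 2..z. real k powr -a)"
proof -
  have supp: "set_pmf P \<subseteq> {0, 1} \<union> {2..z}"
    and pmf_le: "\<And>k. k \<in> {2..z} \<Longrightarrow> pmf P k \<le> f k * (real k powr -a - (1 + real k) powr -a)"
    using assms(1) unfolding in_L_def by auto
  have "real k * pmf P k \<le> B * a * real k powr -a" if k: "k \<in> {2..z}" for k
  proof -
    have "0 \<le> real k powr -a - (1 + real k) powr -a"
      using assms(2) k by (simp add: powr_mono2')
    then have "pmf P k \<le> B * (real k powr -a - (real k + 1) powr -a)"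
      using pmf_le[OF k] assms(3)[of k] by (simp add: add.commute order_trans mult_right_mono)
    then have "pmf P k * real k \<le> B * (real k powr -a - (real k + 1) powr -a) * real k"
      by (simp add: mult_right_mono)
    also have "\<dots> \<le> B * (a * real k powr (-a - 1)) * real k"
      using powr_diff_add_one_le[OF assms(2), of "real k"] assms(4) k
      by (intro mult_right_mono mult_left_mono) auto
    also have "\<dots> = B * a * real k powr -a"
      using k by (simp add: powr_diff powr_minus_divide field_simps)
    finally show ?thesis
      by (simp add: mult.commute)
  qed
  then have "(\<Sum>k\<in>{2..z}. real k * pmf P k) \<le> B * a * (\<Sum>k = 2..z. real k powr -a)"
    unfolding sum_distrib_left by (rule sum_mono)
  moreover have "measure_pmf.expectation P real = pmf P 1 + (\<Sum>k\<in>{2..z}. real k * pmf P k)"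
    using supp by (subst integral_measure_pmf_real[of "{0, 1} \<union> {2..z}"])
      (auto simp: sum.union_disjoint)
  ultimately show ?thesis
    using pmf_le_1[of P 1] by linarith
qed

lemma in_L_expectation_le_of_gt_1:
  fixes a B :: real
  assumes "in_L a g f z P" "1 < a" "\<And>k. f k \<le> B" "0 \<le> B"
  shows "measure_pmf.expectation P real \<le> 1 + B * a / (a - 1)"
proof -
  have "B * a * (\<Sum>k = 2..z. real k powr -a) \<le> B * a * (1 / (a - 1))"
    using sum_powr_le_of_gt_1[OF assms(2)] assms(2,4) by (intro mult_left_mono) auto
  then show ?thesis
    using in_L_expectation_le[OF assms(1) _ assms(3,4)] assms(2) by simp
qed

lemma bigo_times_partial_sum_powr:
  fixes \<alpha> :: real and \<zeta> :: "nat \<Rightarrow> nat" and \<epsilon> :: "nat \<Rightarrow> real"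
  assumes "0 < \<alpha>" "\<forall>N. 0 < \<zeta> N"
    and "\<alpha> < 1 \<Longrightarrow> \<epsilon> \<in> O(\<lambda>N. real (\<zeta> N) powr (\<alpha> - 1))"
    and "\<alpha> = 1 \<Longrightarrow> \<epsilon> \<in> O(\<lambda>N. 1 / ln (real (\<zeta> N)))"
    and "\<alpha> > 1 \<Longrightarrow> \<epsilon> \<in> O(\<lambda>N. 1)"
  shows "(\<lambda>N. \<epsilon> N * (\<Sum>k = 2..\<zeta> N. real k powr -\<alpha>)) \<in> O(\<lambda>_. 1)"
proof -
  define S where "S N = (\<Sum>k = 2..\<zeta> N. real k powr -\<alpha>)" for N
  have S_nonneg: "0 \<le> S N" for N
    unfolding S_def by (intro sum_nonneg) auto
  have \<zeta>_ge_1: "1 \<le> \<zeta> N" for N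
    using assms(2) by (simp add: Suc_le_eq)
  have product_bound: "(\<lambda>N. \<epsilon> N * S N) \<in> O(\<lambda>_. 1)"
    if "\<epsilon> \<in> O(h)" "S \<in> O(H)" "(\<lambda>N. h N * H N) \<in> O(\<lambda>_. 1)" for h H :: "nat \<Rightarrow> real"
    using landau_o.big.mult[OF that(1,2)] that(3) by (rule landau_o.big_trans)
  consider "\<alpha> < 1" | "\<alpha> = 1" | "\<alpha> > 1"
    by linarith
  then have "(\<lambda>N. \<epsilon> N * S N) \<in> O(\<lambda>_. 1)"
  proof cases
    case 1
    have "S N \<le> 1 / (1 - \<alpha>) * real (\<zeta> N) powr (1 - \<alpha>)" for N
    proof -
      have "S N \<le> (real (\<zeta> N) powr (1 - \<alpha>) - 1) / (1 - \<alpha>)"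
        using sum_powr_le[OF assms(1) _ \<zeta>_ge_1[of N]] 1 unfolding S_def by simp
      also have "\<dots> \<le> 1 / (1 - \<alpha>) * real (\<zeta> N) powr (1 - \<alpha>)"
        using 1 by (simp add: divide_right_mono)
      finally show ?thesis .
    qed
    then have "S \<in> O(\<lambda>N. real (\<zeta> N) powr (1 - \<alpha>))"
      using S_nonneg by (intro bigoI[of _ "1 / (1 - \<alpha>)"]) auto
    moreover have "real (\<zeta> N) powr (\<alpha> - 1) * real (\<zeta> N) powr (1 - \<alpha>) = 1" for N
      using assms(2) by (simp add: powr_add[symmetric])
    ultimately show ?thesis
      using product_bound[OF assms(3)[OF 1]] by simp
  next
    case 2
    have "S N \<le> \<bar>ln (real (\<zeta> N))\<bar>" for N
      using sum_powr_neg_one_le_ln[OF \<zeta>_ge_1[of N]] 2 unfolding S_def by simp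
    then have "S \<in> O(\<lambda>N. ln (real (\<zeta> N)))"
      using S_nonneg by (intro bigoI[of _ 1]) auto
    \<comment> \<open>the product is 1, or 0 when \<zeta> N = 1 since then ln (\<zeta> N) = 0 and 1 / 0 = 0\<close>
    moreover have "(\<lambda>N. 1 / ln (real (\<zeta> N)) * ln (real (\<zeta> N))) \<in> O(\<lambda>_. 1)"
      by (intro bigoI[of _ 1]) auto
    ultimately show ?thesis
      using product_bound[OF assms(4)[OF 2]] by blast
  next
    case 3
    have "S N \<le> 1 / (\<alpha> - 1)" for N
      unfolding S_def using 3 by (rule sum_powr_le_of_gt_1)
    then have "S \<in> O(\<lambda>_. 1)"
      using S_nonneg by (intro bigoI[of _ "1 / (\<alpha> - 1)"]) auto
    then show ?thesis
      using product_bound[OF assms(5)[OF 3]] by simp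
  qed
  then show ?thesis
    unfolding S_def .
qed

lemma limsup_less_infinity_if_le_bigo_1:
  fixes f g :: "nat \<Rightarrow> real"
  assumes "g \<in> O(\<lambda>_. 1)" "\<And>N. f N \<le> a + b * g N" "0 \<le> b"
  shows "limsup (\<lambda>N. ereal (f N)) < \<infinity>"
proof -
  obtain c where "eventually (\<lambda>N. \<bar>g N\<bar> \<le> c) sequentially"
    using assms(1) by (auto elim!: landau_o.bigE)
  then have "eventually (\<lambda>N. ereal (f N) \<le> ereal (a + b * c)) sequentially"
  proof eventually_elim
    case (elim N)
    then have "b * g N \<le> b * c"
      using assms(3) by (intro mult_left_mono) auto
    then show ?case
      using assms(2)[of N] by simp
  qed
  then have "limsup (\<lambda>N. ereal (f N)) \<le> ereal (a + b * c)"
    by (rule Limsup_bounded)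
  also have "\<dots> < \<infinity>"
    by simp
  finally show ?thesis .
qed

theorem lemma5:
  fixes \<alpha> \<kappa> :: real and \<zeta> :: "nat \<Rightarrow> nat" and \<epsilon> :: "nat \<Rightarrow> real"
    and g\<^sub>\<alpha> f\<^sub>\<alpha> g\<^sub>\<kappa> f\<^sub>\<kappa> :: "nat \<Rightarrow> real"
    and A K X :: "nat \<Rightarrow> nat pmf"
  assumes "0 < \<alpha>" "\<alpha> < 2" "2 \<le> \<kappa>"
    and "\<forall>N. 0 < \<zeta> N"
    and "\<forall>N. 0 < \<epsilon> N \<and> \<epsilon> N < 1"
    and "admissible_env g\<^sub>\<alpha> f\<^sub>\<alpha>" "admissible_env g\<^sub>\<kappa> f\<^sub>\<kappa>"
    and "\<forall>N. in_L \<alpha> g\<^sub>\<alpha> f\<^sub>\<alpha> (\<zeta> N) (A N)"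
    and "\<forall>N. in_L \<kappa> g\<^sub>\<kappa> f\<^sub>\<kappa> (\<zeta> N) (K N)"
    and "\<forall>N. X N = bind_pmf (bernoulli_pmf (\<epsilon> N)) (\<lambda>b. if b then A N else K N)"
    and "\<alpha> < 1 \<Longrightarrow> \<epsilon> \<in> O(\<lambda>N. real (\<zeta> N) powr (\<alpha> - 1))"
    and "\<alpha> = 1 \<Longrightarrow> \<epsilon> \<in> O(\<lambda>N. 1 / ln (real (\<zeta> N)))"
    and "\<alpha> > 1 \<Longrightarrow> \<epsilon> \<in> O(\<lambda>N. 1)"
  shows "limsup (\<lambda>N. ereal (measure_pmf.expectation (X N) real)) < \<infinity>"
proof -
  obtain B\<^sub>\<alpha> where B\<^sub>\<alpha>: "0 \<le> B\<^sub>\<alpha>" "\<And>k. f\<^sub>\<alpha> k \<le> B\<^sub>\<alpha>"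
    using admissible_env_bounded_above[OF assms(6)] by blast
  obtain B\<^sub>\<kappa> where B\<^sub>\<kappa>: "0 \<le> B\<^sub>\<kappa>" "\<And>k. f\<^sub>\<kappa> k \<le> B\<^sub>\<kappa>"
    using admissible_env_bounded_above[OF assms(7)] by blast
  define S where "S N = (\<Sum>k = 2..\<zeta> N. real k powr -\<alpha>)" for N
  have "measure_pmf.expectation (X N) real
      \<le> (2 + B\<^sub>\<kappa> * \<kappa> / (\<kappa> - 1)) + B\<^sub>\<alpha> * \<alpha> * (\<epsilon> N * S N)" for N
  proof -
    have \<epsilon>: "0 \<le> \<epsilon> N" "\<epsilon> N \<le> 1"
      using assms(5) by (auto simp: less_imp_le)
    have "measure_pmf.expectation (X N) real
        \<le> \<epsilon> N * measure_pmf.expectation (A N) real + measure_pmf.expectation (K N) real"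
      unfolding assms(10)[rule_format]
      using \<epsilon> assms(8,9) by (intro expectation_bernoulli_mixture_le in_L_finite_support) auto
    also have "\<dots> \<le> \<epsilon> N * (1 + B\<^sub>\<alpha> * \<alpha> * S N) + (1 + B\<^sub>\<kappa> * \<kappa> / (\<kappa> - 1))"
      unfolding S_def using \<epsilon>(1)
        in_L_expectation_le[of \<alpha> g\<^sub>\<alpha> f\<^sub>\<alpha> "\<zeta> N" "A N" B\<^sub>\<alpha>]
        in_L_expectation_le_of_gt_1[of \<kappa> g\<^sub>\<kappa> f\<^sub>\<kappa> "\<zeta> N" "K N" B\<^sub>\<kappa>]
        assms(1,3,8,9) B\<^sub>\<alpha> B\<^sub>\<kappa>
      by (intro add_mono mult_left_mono) auto
    finally show ?thesis
      using \<epsilon>(2) by (simp add: algebra_simps)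
  qed
  moreover have "(\<lambda>N. \<epsilon> N * S N) \<in> O(\<lambda>_. 1)"
    unfolding S_def using assms(1,4,11-13) by (rule bigo_times_partial_sum_powr)
  ultimately show ?thesis
    using B\<^sub>\<alpha>(1) assms(1) by (intro limsup_less_infinity_if_le_bigo_1[where b = "B\<^sub>\<alpha> * \<alpha>"]) auto
qed

end
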